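(* Let $\alpha\in(0,1)$, $\eta\ge0$, $\gamma>0$, $a>0$, $b\in\mathbb R\setminus\{0\}$, and assume $b^2\neq\frac{(k_1^2-ak_2^2)(ak_1^2-k_2^2)}{(a+1)(k_1^2+k_2^2)}\pi^2$ for all $k_1,k_2\in\mathbb Z$ with $(k_1,k_2)\neq(0,0)$. Then for every $\lambda\in\mathbb R$, $\ker(i\lambda I-\mathcal A)=\{0\}$.
   Context: Let $\mu(\xi)=|\xi|^{\frac{2\alpha-1}{2}}$ and $\kappa(\alpha)=\frac{\sin(\alpha\pi)}{\pi}$. Let $H^1_L(0,1)=\{u\in H^1(0,1):u(0)=0\}$. $\mathcal H=H^1_L(0,1)\times L^2(0,1)\times H^1_0(0,1)\times L^2(0,1)\times L^2(\mathbb R)$ with inner product $\langle(u,v,y,z,\omega),(\tilde u,\tilde v,\tilde y,\tilde z,\tilde\omega)\rangle_{\mathcal H}=\int_0^1(v\bar{\tilde v}+u_x\bar{\tilde u}_x+z\bar{\tilde z}+a y_x\bar{\tilde y}_x)dx+\gamma\kappa(\alpha)\int_{\mathbb R}\omega\bar{\tilde\omega}\,d\xi$. $D(\mathcal A)$ is the set of $(u,v,y,z,\omega)\in\mathcal H$ with $u\in H^2(0,1)\cap H^1_L(0,1)$, $y\in H^2(0,1)\cap H^1_0(0,1)$, $v\in H^1_L(0,1)$, $z\in H^1_0(0,1)$, $-(\xi^2+\eta)\omega+v(1)\mu(\xi)\in L^2(\mathbb R)$, $|\xi|\omega\in L^2(\mathbb R)$, $u_x(1)+\gamma\kappa(\alpha)\int_{\mathbb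 R}\mu(\xi)\omega(\xi)d\xi=0$, and $\mathcal A(u,v,y,z,\omega)=(v,\,u_{xx}-bz,\,z,\,ay_{xx}+bv,\,-(\xi^2+\eta)\omega+v(1)\mu(\xi))$. *)

theory Defs
  imports "HOL-Analysis.Analysis"
begin

definition L2_on :: "real set \<Rightarrow> (real \<Rightarrow> complex) \<Rightarrow> bool" where
  "L2_on S f \<longleftrightarrow> f \<in> borel_measurable (lebesgue_on S) \<and>
     integrable (lebesgue_on S) (\<lambda>x. (cmod (f x))^2)"

text \<open>u (the continuous representative of an element of H^1(0,1)) has the
  L^2(0,1) weak derivative g: u(x) = u(0) + int_0^x g for all x in [0,1].\<close>
definition weak_deriv01 :: "(real \<Rightarrow> complex) \<Rightarrow> (real \<Rightarrow> complex) \<Rightarrow> bool" where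
  "weak_deriv01 u g \<longleftrightarrow> L2_on {0..1} g \<and> (\<forall>x\<in>{0..1}. u x = u 0 + integral {0..x} g)"

definition mu :: "real \<Rightarrow> real \<Rightarrow> real" where
  "mu \<alpha> \<xi> = \<bar>\<xi>\<bar> powr ((2*\<alpha> - 1)/2)"

definition kappa :: "real \<Rightarrow> real" where
  "kappa \<alpha> = sin (\<alpha> * pi) / pi"

definition in_DA :: "real \<Rightarrow> real \<Rightarrow> real \<Rightarrow>
   (real \<Rightarrow> complex) \<Rightarrow> (real \<Rightarrow> complex) \<Rightarrow> (real \<Rightarrow> complex) \<Rightarrow>
   (real \<Rightarrow> complex) \<Rightarrow> (real \<Rightarrow> complex) \<Rightarrow> (real \<Rightarrow> complex) \<Rightarrow>
   (real \<Rightarrow> complex) \<Rightarrow> (real \<Rightarrow> complex) \<Rightarrow> (real \<Rightarrow> complex) \<Rightarrow>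
   (real \<Rightarrow> complex) \<Rightarrow> (real \<Rightarrow> complex) \<Rightarrow> bool" where
  "in_DA \<alpha> \<eta> \<gamma> u ux uxx v vx y yx yxx z zx \<omega> \<longleftrightarrow>
     weak_deriv01 u ux \<and> weak_deriv01 ux uxx \<and> u 0 = 0 \<and>
     weak_deriv01 y yx \<and> weak_deriv01 yx yxx \<and> y 0 = 0 \<and> y 1 = 0 \<and>
     weak_deriv01 v vx \<and> v 0 = 0 \<and>
     weak_deriv01 z zx \<and> z 0 = 0 \<and> z 1 = 0 \<and>
     L2_on UNIV \<omega> \<and>
     L2_on UNIV (\<lambda>\<xi>. - complex_of_real (\<xi>^2 + \<eta>) * \<omega> \<xi> + v 1 * complex_of_real (mu \<alpha> \<xi>)) \<and>
     L2_on UNIV (\<lambda>\<xi>. complex_of_real \<bar>\<xi>\<bar> * \<omega> \<xi>) \<and>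
     ux 1 + complex_of_real (\<gamma> * kappa \<alpha>) *
        integral\<^sup>L lebesgue (\<lambda>\<xi>. complex_of_real (mu \<alpha> \<xi>) * \<omega> \<xi>) = 0"

end

theory Submission
  imports Defs
begin

(* For \<lambda> \<noteq> 0, integrating the undamped system against (u, y) gives Im (u_x(1) conj u(1)) = 0.
   The transmission condition turns u_x(1) into -\<gamma>\<kappa> \<integral> \<mu> \<omega>, and the last equation gives
   \<omega> = v(1) \<mu> / (\<xi>^2 + \<eta> + i\<lambda>) with v(1) = i\<lambda> u(1); this makes the same imaginary part a
   nonzero multiple of |v(1)|^2. Hence v(1) = 0, so \<omega> = 0 and u_x(1) = 0.
   The remaining overdetermined problem is decoupled by p = u + i d y, where d is one of the two
   roots of b d^2 - \<lambda>(a - 1) d - a b = 0: then p'' = -m p with m = \<lambda>^2 - d\<lambda>b/a, p(0) = p(1) = 0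
   and p'(1) = i d y'(1). If y'(1) \<noteq> 0, both values of m are Dirichlet eigenvalues (n \<pi>)^2, and
   eliminating \<lambda> from the Vieta relations produces exactly an excluded value of b^2. Otherwise
   both combinations vanish, hence so do u and y. For \<lambda> = 0 the system is just u'' = y'' = 0. *)

section \<open>Functions with a square-integrable derivative on [0, 1]\<close>

lemma negligible_of_AE_lebesgue:
  assumes "AE x in lebesgue. x \<in> S \<longrightarrow> P x"
  shows "negligible {x \<in> S. \<not> P x}"
  using assms unfolding eventually_ae_filter_negligible
  by (metis (mono_tags, lifting) mem_Collect_eq negligible_subset subsetI)

lemma L2_on_integrable_on:
  fixes g :: "real \<Rightarrow> complex"
  assumes "L2_on {c..d} g"
  shows "g integrable_on {c..d}"
proof -
  have measurable_g: "g \<in> borel_measurable (lebesgue_on {c..d})"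
    and "integrable (lebesgue_on {c..d}) (\<lambda>x. (cmod (g x))^2)"
    using assms unfolding L2_on_def by blast+
  then have "integrable (lebesgue_on {c..d}) (\<lambda>x. cmod (g x))"
    using finite_measure.square_integrable_imp_integrable[OF finite_measure_lebesgue_on,
        of "{c..d}" "\<lambda>x. cmod (g x)"]
    by simp
  then have "integrable (lebesgue_on {c..d}) g"
    using measurable_g by (rule integrable_norm_cancel)
  then show ?thesis
    by (rule integrable_on_lebesgue_on) simp
qed

lemma integral_cong_AE_unit_interval:
  fixes g h :: "real \<Rightarrow> 'a::banach"
  assumes "AE x in lebesgue. x \<in> {0<..<1} \<longrightarrow> g x = h x" "t \<in> {0..1}"
  shows "integral {0..t} g = integral {0..t} h"
proof (rule integral_spike)
  show "negligible ({x \<in> {0<..<1}. g x \<noteq> h x} \<union> {0, 1})"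
    using negligible_of_AE_lebesgue[OF assms(1)] by (simp add: negligible_insert)
qed (use assms(2) in auto)

lemma weak_deriv01_continuous_on:
  assumes "weak_deriv01 f g"
  shows "continuous_on {0..1} f"
proof -
  have "g integrable_on {0..1}"
    using assms L2_on_integrable_on unfolding weak_deriv01_def by blast
  then have "continuous_on {0..1} (\<lambda>x. f 0 + integral {0..x} g)"
    by (intro continuous_intros indefinite_integral_continuous_1)
  then show ?thesis
    by (rule continuous_on_eq) (use assms in \<open>metis weak_deriv01_def\<close>)
qed

lemma weak_deriv01_has_vector_derivative:
  assumes "weak_deriv01 f g" "continuous_on {0..1} h"
    and "AE x in lebesgue. x \<in> {0<..<1} \<longrightarrow> g x = h x" "x \<in> {0..1}"
  shows "(f has_vector_derivative h x) (at x within {0..1})"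
proof (rule has_vector_derivative_transform[OF assms(4)])
  show "((\<lambda>t. f 0 + integral {0..t} h) has_vector_derivative h x) (at x within {0..1})"
    using integral_has_vector_derivative[OF assms(2,4)]
    by (rule has_vector_derivative_add[OF has_vector_derivative_const, simplified])
  show "f t = f 0 + integral {0..t} h" if "t \<in> {0..1}" for t
    using assms(1) integral_cong_AE_unit_interval[OF assms(3) that] that
    unfolding weak_deriv01_def by metis
qed

lemma continuous_on_AE_eq:
  fixes f g :: "real \<Rightarrow> 'a::real_normed_vector"
  assumes "c < d" "continuous_on {c..d} f" "continuous_on {c..d} g"
    and "AE x in lebesgue. x \<in> {c<..<d} \<longrightarrow> f x = g x" "x \<in> {c..d}"
  shows "f x = g x"
proof -
  have "open ({c<..<d} \<inter> (\<lambda>x. f x - g x) -` (- {0}))"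
    by (intro continuous_open_preimage continuous_intros continuous_on_subset[OF assms(2)]
        continuous_on_subset[OF assms(3)]) auto
  moreover have "negligible ({c<..<d} \<inter> (\<lambda>x. f x - g x) -` (- {0}))"
    using negligible_of_AE_lebesgue[OF assms(4)] by (simp add: Int_def vimage_def)
  ultimately have "f t - g t = 0" if "t \<in> {c<..<d}" for t
    using open_not_negligible that by blast
  then have "f x - g x = 0"
    using continuous_constant_on_closure[of "{c<..<d}" "\<lambda>x. f x - g x" 0 x] assms
    by (simp add: closure_greaterThanLessThan continuous_on_diff)
  then show ?thesis
    by simp
qed

section \<open>The equation p'' = -m p on [0, 1]\<close>

lemma has_vector_derivative_zero_imp_eq_left:
  fixes f :: "real \<Rightarrow> 'a::real_normed_vector"
  assumes "\<And>t. t \<in> {c..d} \<Longrightarrow> (f has_vector_derivative 0) (at t within {c..d})" "x \<in> {c..d}"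
  shows "f x = f c"
proof -
  obtain k where "\<And>t. t \<in> {c..d} \<Longrightarrow> f t = k"
    using has_vector_derivative_zero_constant[of "{c..d}" f] assms(1) by auto
  then show ?thesis
    using assms(2) by force
qed

definition harmonic_ode :: "complex \<Rightarrow> (real \<Rightarrow> complex) \<Rightarrow> (real \<Rightarrow> complex) \<Rightarrow> bool" where
  "harmonic_ode m p p' \<longleftrightarrow> (\<forall>t\<in>{0..1}.
     (p has_vector_derivative p' t) (at t within {0..1}) \<and>
     (p' has_vector_derivative - m * p t) (at t within {0..1}))"

(* sin (\<surd>m x) / \<surd>m and cos (\<surd>m x) do not depend on the branch of \<surd>m; x is the limit of the
   former at m = 0. *)
definition sin_sqrt :: "complex \<Rightarrow> real \<Rightarrow> complex" where
  "sin_sqrt m x = (if m = 0 then of_real x else sin (csqrt m * of_real x) / csqrt m)"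

definition cos_sqrt :: "complex \<Rightarrow> real \<Rightarrow> complex" where
  "cos_sqrt m x = cos (csqrt m * of_real x)"

lemma sin_sqrt_0 [simp]: "sin_sqrt m 0 = 0"
  by (simp add: sin_sqrt_def)

lemma cos_sqrt_0 [simp]: "cos_sqrt m 0 = 1"
  by (simp add: cos_sqrt_def)

lemma has_vector_derivative_sin_sqrt:
  "(sin_sqrt m has_vector_derivative cos_sqrt m x) (at x within S)"
proof (cases "m = 0")
  case True
  then have "sin_sqrt m = of_real" "cos_sqrt m x = 1"
    by (simp_all add: fun_eq_iff sin_sqrt_def cos_sqrt_def)
  then show ?thesis
    using has_vector_derivative_of_real[OF DERIV_ident[where F="at x within S"]] by simp
next
  case False
  define w where "w = csqrt m"
  have "w \<noteq> 0"
    using False by (simp add: w_def)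
  then have "((\<lambda>z. sin (w * z) / w) has_field_derivative cos (w * of_real x)) (at (of_real x))"
    by (auto intro!: derivative_eq_intros)
  then have "((\<lambda>x. sin (w * of_real x) / w) has_vector_derivative cos (w * of_real x)) (at x within S)"
    by (rule has_vector_derivative_real_field)
  then show ?thesis
    using False by (simp add: sin_sqrt_def[abs_def] cos_sqrt_def w_def)
qed

lemma has_vector_derivative_cos_sqrt:
  "(cos_sqrt m has_vector_derivative - m * sin_sqrt m x) (at x within S)"
proof (cases "m = 0")
  case True
  then have "cos_sqrt m = (\<lambda>_. 1)"
    by (simp add: fun_eq_iff cos_sqrt_def)
  then show ?thesis
    using True by (simp add: has_vector_derivative_const)
next
  case False
  define w where "w = csqrt m"
  have "w \<noteq> 0" "w * w = m"
    using False by (simp_all add: w_def flip: power2_eq_square)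
  have "((\<lambda>z. cos (w * z)) has_field_derivative - sin (w * of_real x) * w) (at (of_real x))"
    by (auto intro!: derivative_eq_intros)
  also have "- sin (w * of_real x) * w = - m * (sin (w * of_real x) / w)"
    using \<open>w \<noteq> 0\<close> by (simp flip: \<open>w * w = m\<close>)
  finally have "((\<lambda>x. cos (w * of_real x)) has_vector_derivative - m * (sin (w * of_real x) / w))
      (at x within S)"
    by (rule has_vector_derivative_real_field)
  then show ?thesis
    using False by (simp add: sin_sqrt_def cos_sqrt_def[abs_def] w_def)
qed

lemma cos_sqrt_sq_add_sin_sqrt_sq: "cos_sqrt m x ^ 2 + m * sin_sqrt m x ^ 2 = 1"
proof (cases "m = 0")
  case False
  then have "m * sin_sqrt m x ^ 2 = sin (csqrt m * of_real x) ^ 2"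
    by (simp add: sin_sqrt_def power_divide)
  then show ?thesis
    by (simp add: cos_sqrt_def add.commute)
qed (simp add: cos_sqrt_def)

lemma sin_sqrt_1_eq_0D:
  assumes "sin_sqrt m 1 = 0"
  shows "\<exists>n::int. n \<noteq> 0 \<and> m = of_real ((of_int n * pi)^2)"
proof -
  have "m \<noteq> 0"
    using assms unfolding sin_sqrt_def by (metis of_real_1 one_neq_zero)
  then have "sin (csqrt m) = 0"
    using assms by (simp add: sin_sqrt_def)
  then obtain n :: int where n: "csqrt m = of_real (n * pi)"
    by (auto simp: sin_eq_0)
  then have "m = of_real ((n * pi)^2)"
    by (metis of_real_power power2_csqrt)
  moreover have "n \<noteq> 0"
    using n \<open>m \<noteq> 0\<close> csqrt_eq_0 by fastforce
  ultimately show ?thesis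
    by (intro exI[of _ n]) simp
qed

lemma harmonic_ode_wronskians:
  assumes "harmonic_ode m p p'" "p 0 = 0" "x \<in> {0..1}"
  shows "p' x * sin_sqrt m x - p x * cos_sqrt m x = 0"
    and "p' x * cos_sqrt m x + m * (p x * sin_sqrt m x) = p' 0"
proof -
  let ?S = "sin_sqrt m" and ?C = "cos_sqrt m"
  note S = has_vector_derivative_sin_sqrt and C = has_vector_derivative_cos_sqrt
  note p = assms(1)[unfolded harmonic_ode_def, rule_format, THEN conjunct1]
    and p' = assms(1)[unfolded harmonic_ode_def, rule_format, THEN conjunct2]
  have "p' x * ?S x - p x * ?C x = p' 0 * ?S 0 - p 0 * ?C 0"
  proof (rule has_vector_derivative_zero_imp_eq_left[OF _ assms(3)])
    fix t :: real
    assume t: "t \<in> {0..1}"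
    show "((\<lambda>t. p' t * ?S t - p t * ?C t) has_vector_derivative 0) (at t within {0..1})"
      by (rule has_vector_derivative_eq_rhs[OF has_vector_derivative_diff[OF
            has_vector_derivative_mult[OF p'[OF t] S] has_vector_derivative_mult[OF p[OF t] C]]])
        (simp add: algebra_simps)
  qed
  then show "p' x * ?S x - p x * ?C x = 0"
    using \<open>p 0 = 0\<close> by simp
  have "p' x * ?C x + m * (p x * ?S x) = p' 0 * ?C 0 + m * (p 0 * ?S 0)"
  proof (rule has_vector_derivative_zero_imp_eq_left[OF _ assms(3)])
    fix t :: real
    assume t: "t \<in> {0..1}"
    show "((\<lambda>t. p' t * ?C t + m * (p t * ?S t)) has_vector_derivative 0) (at t within {0..1})"
      by (rule has_vector_derivative_eq_rhs[OF has_vector_derivative_add[OF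
            has_vector_derivative_mult[OF p'[OF t] C]
            has_vector_derivative_mult_right[OF has_vector_derivative_mult[OF p[OF t] S]]]])
        (simp add: algebra_simps)
  qed
  then show "p' x * ?C x + m * (p x * ?S x) = p' 0"
    by simp
qed

lemma harmonic_ode_eq_sin_sqrt:
  assumes "harmonic_ode m p p'" "p 0 = 0" "x \<in> {0..1}"
  shows "p x = p' 0 * sin_sqrt m x" and "p' x = p' 0 * cos_sqrt m x"
proof -
  let ?S = "sin_sqrt m" and ?C = "cos_sqrt m"
  note W = harmonic_ode_wronskians[OF assms]
  have CS: "?C x ^ 2 + m * ?S x ^ 2 = 1"
    by (rule cos_sqrt_sq_add_sin_sqrt_sq)
  have "p x = p x * (?C x ^ 2 + m * ?S x ^ 2)"
    unfolding CS by simp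
  also have "\<dots> = ?S x * (p' x * ?C x + m * (p x * ?S x)) - ?C x * (p' x * ?S x - p x * ?C x)"
    by (simp add: algebra_simps power2_eq_square)
  finally show "p x = p' 0 * ?S x"
    unfolding W by simp
  have "p' x = p' x * (?C x ^ 2 + m * ?S x ^ 2)"
    unfolding CS by simp
  also have "\<dots> = ?C x * (p' x * ?C x + m * (p x * ?S x)) + m * ?S x * (p' x * ?S x - p x * ?C x)"
    by (simp add: algebra_simps power2_eq_square)
  finally show "p' x = p' 0 * ?C x"
    unfolding W by simp
qed

lemma harmonic_ode_dirichlet_eigenvalue:
  assumes "harmonic_ode m p p'" "p 0 = 0" "p 1 = 0" "p' 1 \<noteq> 0"
  shows "\<exists>n::int. n \<noteq> 0 \<and> m = of_real ((of_int n * pi)^2)"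
proof -
  have "p' 0 * sin_sqrt m 1 = 0" "p' 0 * cos_sqrt m 1 \<noteq> 0"
    using harmonic_ode_eq_sin_sqrt[OF assms(1,2), of 1] assms(3,4) by simp_all
  then have "sin_sqrt m 1 = 0"
    by simp
  then show ?thesis
    by (rule sin_sqrt_1_eq_0D)
qed

lemma harmonic_ode_eq_0_if_vanishing_at_1:
  assumes "harmonic_ode m p p'" "p 0 = 0" "p 1 = 0" "p' 1 = 0" "x \<in> {0..1}"
  shows "p x = 0"
proof -
  note representation = harmonic_ode_eq_sin_sqrt[OF assms(1,2)]
  have S1: "p' 0 * sin_sqrt m 1 = 0" and C1: "p' 0 * cos_sqrt m 1 = 0"
    using representation[of 1] assms(3,4) by simp_all
  have "p' 0 = p' 0 * (cos_sqrt m 1 ^ 2 + m * sin_sqrt m 1 ^ 2)"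
    by (simp add: cos_sqrt_sq_add_sin_sqrt_sq)
  also have "\<dots> = (p' 0 * cos_sqrt m 1) * cos_sqrt m 1 + m * (p' 0 * sin_sqrt m 1) * sin_sqrt m 1"
    by (simp add: algebra_simps power2_eq_square)
  finally have "p' 0 = 0"
    unfolding S1 C1 by simp
  then show ?thesis
    using representation(1)[OF assms(5)] by simp
qed

section \<open>The coupled wave system\<close>

(* The eigenvalue equations with v = i\<lambda>u and z = i\<lambda>y eliminated:
   u'' = -\<lambda>^2 u + i\<lambda>b y and a y'' = -\<lambda>^2 y - i\<lambda>b u. *)
definition coupled_waves :: "real \<Rightarrow> real \<Rightarrow> real \<Rightarrow> (real \<Rightarrow> complex) \<Rightarrow> (real \<Rightarrow> complex) \<Rightarrow>
    (real \<Rightarrow> complex) \<Rightarrow> (real \<Rightarrow> complex) \<Rightarrow> bool" where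
  "coupled_waves a b l u u' y y' \<longleftrightarrow> (\<forall>x\<in>{0..1}.
     (u has_vector_derivative u' x) (at x within {0..1}) \<and>
     (u' has_vector_derivative (- of_real (l^2) * u x + \<i> * l * b * y x)) (at x within {0..1}) \<and>
     (y has_vector_derivative y' x) (at x within {0..1}) \<and>
     (y' has_vector_derivative (- of_real (l^2) * y x - \<i> * l * b * u x) / a) (at x within {0..1}))"

lemma coupled_wavesD:
  assumes "coupled_waves a b l u u' y y'" "x \<in> {0..1}"
  shows "(u has_vector_derivative u' x) (at x within {0..1})"
    and "(u' has_vector_derivative (- of_real (l^2) * u x + \<i> * l * b * y x)) (at x within {0..1})"
    and "(y has_vector_derivative y' x) (at x within {0..1})"
    and "(y' has_vector_derivative (- of_real (l^2) * y x - \<i> * l * b * u x) / a) (at x within {0..1})"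
  using assms unfolding coupled_waves_def by auto

lemma coupled_waves_zero_frequency:
  assumes "coupled_waves a b 0 u u' y y'" "u 0 = 0" "y 0 = 0" "y 1 = 0" "u' 1 = 0" "x \<in> {0..1}"
  shows "u x = 0 \<and> y x = 0"
proof -
  have u: "harmonic_ode 0 u u'" and y: "harmonic_ode 0 y y'"
    using coupled_wavesD[OF assms(1)] unfolding harmonic_ode_def by simp_all
  have "u t = u' 0 * of_real t" "u' t = u' 0" "y t = y' 0 * of_real t" if "t \<in> {0..1}" for t
    using harmonic_ode_eq_sin_sqrt[OF u assms(2) that] harmonic_ode_eq_sin_sqrt(1)[OF y assms(3) that]
    by (simp_all add: sin_sqrt_def cos_sqrt_def)
  moreover from this(2,3)[of 1] have "u' 0 = 0" "y' 0 = 0"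
    using assms(4,5) by simp_all
  ultimately show ?thesis
    using assms(6) by simp
qed

lemma coupled_waves_energy_identity:
  assumes "coupled_waves a b l u u' y y'" "a \<noteq> 0" "u 0 = 0" "y 0 = 0" "y 1 = 0"
  shows "Im (u' 1 * cnj (u 1)) = 0"
proof -
  define G where "G t = u' t * cnj (u t) - cnj (u' t) * u t + a * (y' t * cnj (y t) - cnj (y' t) * y t)"
    for t
  (* In G' the coupling terms i\<lambda>b (y conj u - u conj y) cancel against their conjugates. *)
  have "G 1 = G 0"
  proof (rule has_vector_derivative_zero_imp_eq_left)
    fix t :: real
    assume "t \<in> {0..1}"
    note derivs = coupled_wavesD[OF assms(1) this]
    show "(G has_vector_derivative 0) (at t within {0..1})"
      unfolding G_def
      by (rule has_vector_derivative_eq_rhs[OF has_vector_derivative_add[OF has_vector_derivative_diff[OF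
            has_vector_derivative_mult[OF derivs(2) has_vector_derivative_cnj[OF derivs(1)]]
            has_vector_derivative_mult[OF has_vector_derivative_cnj[OF derivs(2)] derivs(1)]]
            has_vector_derivative_mult_right[OF has_vector_derivative_diff[OF
            has_vector_derivative_mult[OF derivs(4) has_vector_derivative_cnj[OF derivs(3)]]
            has_vector_derivative_mult[OF has_vector_derivative_cnj[OF derivs(4)] derivs(3)]]]]])
        (use \<open>a \<noteq> 0\<close> in \<open>simp add: field_simps\<close>)
  qed simp
  then have "u' 1 * cnj (u 1) - cnj (u' 1 * cnj (u 1)) = 0"
    using assms(3-5) by (simp add: G_def)
  then show ?thesis
    by (simp add: complex_eq_iff)
qed

(* The quadratic in d says that (1, i d) is a left eigenvector of the coefficient matrix of
   the system. *)
lemma coupled_waves_combination: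
  assumes "coupled_waves a b l u u' y y'" "a \<noteq> 0" "b * d^2 - l * (a - 1) * d - a * b = 0"
  shows "harmonic_ode (of_real (l^2 - d * l * b / a))
    (\<lambda>t. u t + \<i> * d * y t) (\<lambda>t. u' t + \<i> * d * y' t)"
  unfolding harmonic_ode_def
proof (intro ballI conjI)
  fix x :: real
  assume "x \<in> {0..1}"
  note derivs = coupled_wavesD[OF assms(1) this]
  show "((\<lambda>t. u t + \<i> * d * y t) has_vector_derivative u' x + \<i> * d * y' x) (at x within {0..1})"
    using derivs by (intro has_vector_derivative_add has_vector_derivative_mult_right) auto
  have "- of_real (l^2) * u x + \<i> * l * b * y x + \<i> * d * ((- of_real (l^2) * y x - \<i> * l * b * u x) / a)
      + of_real (l^2 - d * l * b / a) * (u x + \<i> * d * y x)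
      = - \<i> * of_real (l / a * (b * d^2 - l * (a - 1) * d - a * b)) * y x"
    using \<open>a \<noteq> 0\<close> by (simp add: field_simps power2_eq_square)
  also have "\<dots> = 0"
    using assms(3) by simp
  finally show "((\<lambda>t. u' t + \<i> * d * y' t) has_vector_derivative
      - of_real (l^2 - d * l * b / a) * (u x + \<i> * d * y x)) (at x within {0..1})"
    using derivs
    by (intro has_vector_derivative_eq_rhs[OF has_vector_derivative_add[OF _ has_vector_derivative_mult_right]])
      (auto simp: algebra_simps)
qed

lemma decoupling_roots:
  fixes a b l :: real
  assumes "a > 0" "b \<noteq> 0"
  obtains d1 d2 where "b * d1^2 - l * (a - 1) * d1 - a * b = 0" "b * d2^2 - l * (a - 1) * d2 - a * b = 0"
    and "d1 \<noteq> d2" "d1 + d2 = l * (a - 1) / b" "d1 * d2 = - a"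
proof -
  define r where "r = sqrt (l^2 * (a - 1)^2 + 4 * a * b^2)"
  have "r > 0" and r2: "r^2 = l^2 * (a - 1)^2 + 4 * a * b^2"
    using assms by (simp_all add: r_def add_nonneg_pos)
  have quadratic: "b * ((l * (a - 1) + s) / (2 * b))^2 - l * (a - 1) * ((l * (a - 1) + s) / (2 * b)) - a * b
      = (s^2 - (l^2 * (a - 1)^2 + 4 * a * b^2)) / (4 * b)" for s
    using \<open>b \<noteq> 0\<close> by (simp add: field_simps power2_eq_square)
  have product: "(l * (a - 1) + r) / (2 * b) * ((l * (a - 1) + - r) / (2 * b))
      = ((l * (a - 1))^2 - r^2) / (4 * b^2)"
    using \<open>b \<noteq> 0\<close> by (simp add: field_simps power2_eq_square)
  show ?thesis
  proof (rule that[of "(l * (a - 1) + r) / (2 * b)" "(l * (a - 1) + - r) / (2 * b)"])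
    show "b * ((l * (a - 1) + r) / (2 * b))^2 - l * (a - 1) * ((l * (a - 1) + r) / (2 * b)) - a * b = 0"
      "b * ((l * (a - 1) + - r) / (2 * b))^2 - l * (a - 1) * ((l * (a - 1) + - r) / (2 * b)) - a * b = 0"
      unfolding quadratic by (simp_all add: r2)
    show "(l * (a - 1) + r) / (2 * b) \<noteq> (l * (a - 1) + - r) / (2 * b)"
      "(l * (a - 1) + r) / (2 * b) + (l * (a - 1) + - r) / (2 * b) = l * (a - 1) / b"
      using \<open>b \<noteq> 0\<close> \<open>r > 0\<close> by (simp_all add: field_simps)
    show "(l * (a - 1) + r) / (2 * b) * ((l * (a - 1) + - r) / (2 * b)) = - a"
      unfolding product r2 using \<open>b \<noteq> 0\<close> by (simp add: field_simps power2_eq_square)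
  qed
qed

lemma decoupled_eigenvalues_sum_product:
  fixes a b l d1 d2 :: real
  assumes "a > 0" "b \<noteq> 0" "d1 + d2 = l * (a - 1) / b" "d1 * d2 = - a"
  defines "m1 \<equiv> l^2 - d1 * l * b / a" and "m2 \<equiv> l^2 - d2 * l * b / a"
  shows "a * (m1 + m2) = l^2 * (a + 1)" and "a * (m1 * m2) = l^2 * (l^2 - b^2)"
proof -
  have "a * (m1 + m2) = 2 * a * l^2 - (d1 + d2) * l * b"
    using assms(1) by (simp add: m1_def m2_def field_simps)
  also have "\<dots> = l^2 * (a + 1)"
    using assms(2) by (simp add: assms(3) field_simps power2_eq_square)
  finally show "a * (m1 + m2) = l^2 * (a + 1)" .
  have "a * (m1 * m2) = a * l^4 - (d1 + d2) * l^3 * b + (d1 * d2) * l^2 * b^2 / a"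
    using assms(1)
    by (simp add: m1_def m2_def field_simps power2_eq_square power3_eq_cube power4_eq_xxxx)
  also have "\<dots> = l^2 * (l^2 - b^2)"
    using assms(1,2)
    by (simp add: assms(3,4) field_simps power2_eq_square power3_eq_cube power4_eq_xxxx)
  finally show "a * (m1 * m2) = l^2 * (l^2 - b^2)" .
qed

lemma b_sq_eq_of_sum_product:
  fixes a b l m1 m2 :: real
  assumes "a > 0" "m1 + m2 > 0" "a * (m1 + m2) = l^2 * (a + 1)" "a * (m1 * m2) = l^2 * (l^2 - b^2)"
  shows "b^2 = (m1 - a * m2) * (a * m1 - m2) / ((a + 1) * (m1 + m2))"
proof -
  have l2: "l^2 = a * (m1 + m2) / (a + 1)"
    using assms(1,3) by (simp add: field_simps)
  then have "l^2 > 0"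
    using assms(1,2) by simp
  have ratio: "a * (m1 * m2) / l^2 = (a + 1) * (m1 * m2) / (m1 + m2)"
  proof -
    have "a * (m1 * m2) * (m1 + m2) = (a + 1) * (m1 * m2) * l^2"
      unfolding l2 using assms(1) by (simp add: field_simps)
    then show ?thesis
      using \<open>l^2 > 0\<close> assms(2) by (simp add: frac_eq_eq)
  qed
  have "b^2 = l^2 - a * (m1 * m2) / l^2"
    using \<open>l^2 > 0\<close> assms(4) by (simp add: field_simps)
  also have "\<dots> = a * (m1 + m2) / (a + 1) - (a + 1) * (m1 * m2) / (m1 + m2)"
    unfolding ratio by (simp add: l2)
  also have "\<dots> = (a * (m1 + m2)^2 - (a + 1)^2 * (m1 * m2)) / ((a + 1) * (m1 + m2))"
    using assms(1,2) by (simp add: field_simps power2_eq_square)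
  also have "a * (m1 + m2)^2 - (a + 1)^2 * (m1 * m2) = (m1 - a * m2) * (a * m1 - m2)"
    by (simp add: algebra_simps power2_eq_square)
  finally show ?thesis .
qed

definition nonresonant :: "real \<Rightarrow> real \<Rightarrow> bool" where
  "nonresonant a b \<longleftrightarrow> (\<forall>(k1::int) (k2::int). (k1, k2) \<noteq> (0, 0) \<longrightarrow>
     b^2 \<noteq> (of_int k1^2 - a * of_int k2^2) * (a * of_int k1^2 - of_int k2^2)
       / ((a + 1) * (of_int k1^2 + of_int k2^2)) * pi^2)"

lemma nonresonantD:
  fixes n1 n2 :: int
  assumes "nonresonant a b" "n1 \<noteq> 0"
  defines "m1 \<equiv> (of_int n1 * pi)^2" and "m2 \<equiv> (of_int n2 * pi)^2"
  shows "b^2 \<noteq> (m1 - a * m2) * (a * m1 - m2) / ((a + 1) * (m1 + m2))"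
proof -
  define k1 k2 :: real where "k1 = of_int n1 ^ 2" and "k2 = of_int n2 ^ 2"
  have "(m1 - a * m2) * (a * m1 - m2) / ((a + 1) * (m1 + m2))
      = ((k1 - a * k2) * (a * k1 - k2) * pi^2 * pi^2) / ((a + 1) * (k1 + k2) * pi^2)"
    by (simp add: m1_def m2_def k1_def k2_def power_mult_distrib algebra_simps)
  also have "\<dots> = (k1 - a * k2) * (a * k1 - k2) / ((a + 1) * (k1 + k2)) * pi^2"
    by simp
  finally show ?thesis
    using assms(1,2) unfolding nonresonant_def k1_def k2_def by auto
qed

lemma coupled_waves_nonresonant_eq_0:
  assumes waves: "coupled_waves a b l u u' y y'" and "a > 0" "b \<noteq> 0" "nonresonant a b"
    and "u 0 = 0" "u 1 = 0" "y 0 = 0" "y 1 = 0" "u' 1 = 0" "x \<in> {0..1}"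
  shows "u x = 0 \<and> y x = 0"
proof -
  obtain d1 d2 where roots: "b * d1^2 - l * (a - 1) * d1 - a * b = 0" "b * d2^2 - l * (a - 1) * d2 - a * b = 0"
    and "d1 \<noteq> d2" and vieta: "d1 + d2 = l * (a - 1) / b" "d1 * d2 = - a"
    using decoupling_roots[OF \<open>a > 0\<close> \<open>b \<noteq> 0\<close>] by metis
  have "a \<noteq> 0"
    using \<open>a > 0\<close> by simp
  note combination = coupled_waves_combination[OF waves \<open>a \<noteq> 0\<close>]
  have "y' 1 = 0"
  proof (rule ccontr)
    assume "y' 1 \<noteq> 0"
    have "\<exists>n::int. n \<noteq> 0 \<and> l^2 - d * l * b / a = (of_int n * pi)^2"
      if "b * d^2 - l * (a - 1) * d - a * b = 0" "d \<noteq> 0" for d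
      using harmonic_ode_dirichlet_eigenvalue[OF combination[OF that(1)]] assms(5-9) that(2) \<open>y' 1 \<noteq> 0\<close>
      by (simp only: of_real_eq_iff) simp
    moreover have "d1 \<noteq> 0" "d2 \<noteq> 0"
      using vieta(2) \<open>a > 0\<close> by auto
    ultimately obtain n1 n2 :: int where "n1 \<noteq> 0"
      and m1: "l^2 - d1 * l * b / a = (of_int n1 * pi)^2" and m2: "l^2 - d2 * l * b / a = (of_int n2 * pi)^2"
      using roots by metis
    have "b^2 = ((of_int n1 * pi)^2 - a * (of_int n2 * pi)^2) * (a * (of_int n1 * pi)^2 - (of_int n2 * pi)^2)
        / ((a + 1) * ((of_int n1 * pi)^2 + (of_int n2 * pi)^2))"
      using b_sq_eq_of_sum_product[OF \<open>a > 0\<close> _ decoupled_eigenvalues_sum_product[OF \<open>a > 0\<close> \<open>b \<noteq> 0\<close> vieta]]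
        \<open>n1 \<noteq> 0\<close> unfolding m1 m2 by (simp add: add_pos_nonneg)
    then show False
      using nonresonantD[OF \<open>nonresonant a b\<close> \<open>n1 \<noteq> 0\<close>] by simp
  qed
  then have "u x + \<i> * d1 * y x = 0" "u x + \<i> * d2 * y x = 0"
    using harmonic_ode_eq_0_if_vanishing_at_1[OF combination[OF roots(1)]]
      harmonic_ode_eq_0_if_vanishing_at_1[OF combination[OF roots(2)]] assms(5-10)
    by simp_all
  moreover have "\<i> * of_real (d1 - d2) * y x = (u x + \<i> * d1 * y x) - (u x + \<i> * d2 * y x)"
    by (simp add: algebra_simps)
  ultimately have "y x = 0"
    using \<open>d1 \<noteq> d2\<close> by simp
  then show ?thesis
    using \<open>u x + \<i> * d1 * y x = 0\<close> by simp
qed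

lemma coupled_waves_eq_0:
  assumes "coupled_waves a b l u u' y y'" "a > 0" "b \<noteq> 0" "nonresonant a b"
    and "u 0 = 0" "y 0 = 0" "y 1 = 0" "u' 1 = 0" "l * u 1 = 0" "x \<in> {0..1}"
  shows "u x = 0 \<and> y x = 0"
proof (cases "l = 0")
  case True
  then show ?thesis
    using coupled_waves_zero_frequency assms by blast
next
  case False
  then show ?thesis
    using coupled_waves_nonresonant_eq_0 assms by simp
qed

section \<open>The boundary damping\<close>

lemma integral_lebesgue_pos:
  fixes f :: "real \<Rightarrow> real"
  assumes "integrable lebesgue f" "AE x in lebesgue. 0 < f x"
  shows "0 < integral\<^sup>L lebesgue f"
proof -
  have nonneg: "AE x in lebesgue. 0 \<le> f x"
    using assms(2) by (auto elim: eventually_mono)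
  then have "0 \<le> integral\<^sup>L lebesgue f"
    by (rule integral_nonneg_AE)
  moreover have "integral\<^sup>L lebesgue f \<noteq> 0"
  proof
    assume "integral\<^sup>L lebesgue f = 0"
    then have "AE x in lebesgue. f x = 0"
      using integral_nonneg_eq_0_iff_AE[OF assms(1) nonneg] by simp
    then have "AE x::real in lebesgue. False"
      by (rule eventually_elim2[OF assms(2)]) simp
    then obtain N :: "real set" where "negligible N" "UNIV \<subseteq> N"
      unfolding eventually_ae_filter_negligible by auto
    then show False
      using negligible_subset non_negligible_UNIV by blast
  qed
  ultimately show ?thesis
    by simp
qed

lemma integrable_of_L2_on_UNIV:
  fixes f :: "real \<Rightarrow> complex"
  assumes "L2_on UNIV f" "g \<in> borel_measurable lebesgue"
    and "AE x in lebesgue. (cmod (f x))^2 = c * g x" "c \<noteq> 0"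
  shows "integrable lebesgue g"
proof -
  have "integrable lebesgue (\<lambda>x. (cmod (f x))^2)"
    using assms(1) by (simp add: L2_on_def lebesgue_on_UNIV_eq)
  then have "integrable lebesgue (\<lambda>x. c * g x)"
    by (rule integrable_cong_AE_imp) (use assms(2,3) in auto)
  then show ?thesis
    using assms(4) by simp
qed

lemma AE_omega_eq_resolvent:
  fixes \<omega> :: "real \<Rightarrow> complex" and l \<eta> :: real
  assumes "l \<noteq> 0"
    and "AE \<xi> in lebesgue. - complex_of_real (\<xi>^2 + \<eta>) * \<omega> \<xi> + v1 * complex_of_real (mu \<alpha> \<xi>)
           = \<i> * l * \<omega> \<xi>"
  shows "AE \<xi> in lebesgue. \<omega> \<xi> = v1 * of_real (mu \<alpha> \<xi>) / (of_real (\<xi>^2 + \<eta>) + \<i> * of_real l)"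
  using assms(2)
proof eventually_elim
  case (elim \<xi>)
  then have "\<omega> \<xi> * (of_real (\<xi>^2 + \<eta>) + \<i> * of_real l) = v1 * of_real (mu \<alpha> \<xi>)"
    by (simp add: algebra_simps)
  moreover have "complex_of_real (\<xi>^2 + \<eta>) + \<i> * of_real l \<noteq> 0"
    using assms(1) by (simp add: complex_eq_iff)
  ultimately show ?case
    by (simp add: eq_divide_eq)
qed

definition resolvent_weight :: "real \<Rightarrow> real \<Rightarrow> real \<Rightarrow> real \<Rightarrow> real" where
  "resolvent_weight \<alpha> \<eta> l \<xi> = mu \<alpha> \<xi> ^ 2 / ((\<xi>^2 + \<eta>)^2 + l^2)"

lemma borel_measurable_mu [measurable]: "mu \<alpha> \<in> borel_measurable lborel"
  unfolding mu_def[abs_def] by measurable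

lemma borel_measurable_resolvent_weight [measurable]:
  "resolvent_weight \<alpha> \<eta> l \<in> borel_measurable lborel"
  unfolding resolvent_weight_def[abs_def] by measurable

lemma AE_resolvent_weight_pos:
  assumes "\<eta> \<ge> 0" "l \<noteq> 0"
  shows "AE \<xi> in lebesgue. 0 < (\<xi>^2 + \<eta>) * resolvent_weight \<alpha> \<eta> l \<xi>"
  using AE_completion[OF AE_lborel_singleton[of 0]]
proof eventually_elim
  case (elim \<xi>)
  then have "0 < \<xi>^2 + \<eta>" "0 < mu \<alpha> \<xi>"
    using assms(1) by (simp_all add: mu_def add_pos_nonneg)
  then show ?case
    using assms(2) by (simp add: resolvent_weight_def add_pos_nonneg)
qed

lemma integrable_resolvent_weight:
  fixes \<omega> :: "real \<Rightarrow> complex" and v1 :: complex and l \<eta> :: real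
  assumes "v1 \<noteq> 0" "L2_on UNIV \<omega>" "L2_on UNIV (\<lambda>\<xi>. complex_of_real \<bar>\<xi>\<bar> * \<omega> \<xi>)"
    and "AE \<xi> in lebesgue. \<omega> \<xi> = v1 * of_real (mu \<alpha> \<xi>) / (of_real (\<xi>^2 + \<eta>) + \<i> * of_real l)"
  shows "integrable lebesgue (resolvent_weight \<alpha> \<eta> l)"
    and "integrable lebesgue (\<lambda>\<xi>. (\<xi>^2 + \<eta>) * resolvent_weight \<alpha> \<eta> l \<xi>)"
proof -
  let ?q = "resolvent_weight \<alpha> \<eta> l"
  have norm: "(cmod (v1 * of_real (mu \<alpha> \<xi>) / (of_real (\<xi>^2 + \<eta>) + \<i> * of_real l)))^2
      = (cmod v1)^2 * ?q \<xi>" for \<xi>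
    by (simp add: resolvent_weight_def norm_mult norm_divide power_divide power_mult_distrib cmod_power2)
  have [measurable]: "?q \<in> borel_measurable lebesgue" "(\<lambda>\<xi>. \<xi>^2 * ?q \<xi>) \<in> borel_measurable lebesgue"
    by (rule measurable_completion, measurable)+
  have AE_norm: "AE \<xi> in lebesgue. (cmod (\<omega> \<xi>))^2 = (cmod v1)^2 * ?q \<xi>"
    using assms(4) by eventually_elim (simp only: norm)
  then show "integrable lebesgue ?q"
    using assms(1) by (intro integrable_of_L2_on_UNIV[OF assms(2)]) auto
  have "AE \<xi> in lebesgue. (cmod (of_real \<bar>\<xi>\<bar> * \<omega> \<xi>))^2 = (cmod v1)^2 * (\<xi>^2 * ?q \<xi>)"
    using AE_norm by eventually_elim (simp add: norm_mult power_mult_distrib)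
  then have "integrable lebesgue (\<lambda>\<xi>. \<xi>^2 * ?q \<xi>)"
    using assms(1) by (intro integrable_of_L2_on_UNIV[OF assms(3)]) auto
  moreover note \<open>integrable lebesgue ?q\<close>
  ultimately show "integrable lebesgue (\<lambda>\<xi>. (\<xi>^2 + \<eta>) * ?q \<xi>)"
    by (simp add: distrib_right)
qed

lemma mu_mult_resolvent:
  fixes s l m :: real and v :: complex
  assumes "l \<noteq> 0"
  defines "q \<equiv> m^2 / (s^2 + l^2)"
  shows "of_real m * (v * of_real m / (of_real s + \<i> * of_real l))
    = v * (of_real (s * q) - \<i> * of_real (l * q))"
proof -
  have "s^2 + l^2 \<noteq> 0"
    using assms by (simp add: add_nonneg_pos)
  have "(of_real (s * q) - \<i> * of_real (l * q)) * (of_real s + \<i> * of_real l)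
      = complex_of_real (q * (s^2 + l^2))"
    by (simp add: complex_eq_iff algebra_simps power2_eq_square)
  also have "q * (s^2 + l^2) = m^2"
    using \<open>s^2 + l^2 \<noteq> 0\<close> by (simp add: q_def)
  finally have product: "v * (of_real (s * q) - \<i> * of_real (l * q)) * (of_real s + \<i> * of_real l)
      = of_real m * (v * of_real m)"
    by (simp add: power2_eq_square mult.assoc)
  have "of_real s + \<i> * of_real l \<noteq> 0"
    using assms by (simp add: complex_eq_iff)
  then show ?thesis
    unfolding times_divide_eq_right product[symmetric] by simp
qed

lemma re_cnj_mul_integral_mu_omega_pos:
  fixes \<omega> :: "real \<Rightarrow> complex" and v1 :: complex and l \<eta> :: real
  assumes "l \<noteq> 0" "v1 \<noteq> 0" "\<eta> \<ge> 0" "L2_on UNIV \<omega>" "L2_on UNIV (\<lambda>\<xi>. complex_of_real \<bar>\<xi>\<bar> * \<omega> \<xi>)"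
    and "AE \<xi> in lebesgue. - complex_of_real (\<xi>^2 + \<eta>) * \<omega> \<xi> + v1 * complex_of_real (mu \<alpha> \<xi>)
           = \<i> * l * \<omega> \<xi>"
  shows "0 < Re (cnj v1 * integral\<^sup>L lebesgue (\<lambda>\<xi>. complex_of_real (mu \<alpha> \<xi>) * \<omega> \<xi>))"
proof -
  let ?q = "resolvent_weight \<alpha> \<eta> l"
  note \<omega> = AE_omega_eq_resolvent[OF assms(1,6)]
  note integrable = integrable_resolvent_weight[OF assms(2,4,5) \<omega>]
  have [measurable]: "\<omega> \<in> borel_measurable lebesgue"
    using assms(4) by (simp add: L2_on_def lebesgue_on_UNIV_eq)
  have [measurable]: "mu \<alpha> \<in> borel_measurable lebesgue" "?q \<in> borel_measurable lebesgue"
    "(\<lambda>\<xi>. \<xi>) \<in> borel_measurable lebesgue"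
    by (rule measurable_completion, measurable)+
  have "AE \<xi> in lebesgue. of_real (mu \<alpha> \<xi>) * \<omega> \<xi>
      = v1 * (of_real ((\<xi>^2 + \<eta>) * ?q \<xi>) - \<i> * of_real (l * ?q \<xi>))"
    using \<omega> by eventually_elim (simp only: resolvent_weight_def mu_mult_resolvent[OF assms(1)])
  then have "integral\<^sup>L lebesgue (\<lambda>\<xi>. complex_of_real (mu \<alpha> \<xi>) * \<omega> \<xi>)
      = integral\<^sup>L lebesgue (\<lambda>\<xi>. v1 * (of_real ((\<xi>^2 + \<eta>) * ?q \<xi>) - \<i> * of_real (l * ?q \<xi>)))"
    by (rule integral_cong_AE[rotated 2]) measurable
  also have "\<dots> = v1 * (of_real (integral\<^sup>L lebesgue (\<lambda>\<xi>. (\<xi>^2 + \<eta>) * ?q \<xi>))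
      - \<i> * of_real (integral\<^sup>L lebesgue (\<lambda>\<xi>. l * ?q \<xi>)))"
    using integrable by (simp del: of_real_mult integral_mult_right integral_mult_right_zero)
  finally have "Re (cnj v1 * integral\<^sup>L lebesgue (\<lambda>\<xi>. complex_of_real (mu \<alpha> \<xi>) * \<omega> \<xi>))
      = (cmod v1)^2 * integral\<^sup>L lebesgue (\<lambda>\<xi>. (\<xi>^2 + \<eta>) * ?q \<xi>)"
    by (simp add: mult.assoc[symmetric] mult.commute[of "cnj v1"] flip: complex_norm_square)
  moreover have "0 < integral\<^sup>L lebesgue (\<lambda>\<xi>. (\<xi>^2 + \<eta>) * ?q \<xi>)"
    using integrable(2) AE_resolvent_weight_pos[OF assms(3,1)] by (rule integral_lebesgue_pos)
  ultimately show ?thesis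
    using assms(2) by simp
qed

lemma boundary_velocity_eq_0:
  fixes \<omega> :: "real \<Rightarrow> complex" and l c \<eta> :: real and u1 u1' v1 :: complex
  assumes "l \<noteq> 0" "c > 0" "\<eta> \<ge> 0" "L2_on UNIV \<omega>" "L2_on UNIV (\<lambda>\<xi>. complex_of_real \<bar>\<xi>\<bar> * \<omega> \<xi>)"
    and "AE \<xi> in lebesgue. - complex_of_real (\<xi>^2 + \<eta>) * \<omega> \<xi> + v1 * complex_of_real (mu \<alpha> \<xi>)
           = \<i> * l * \<omega> \<xi>"
    and "u1' + c * integral\<^sup>L lebesgue (\<lambda>\<xi>. complex_of_real (mu \<alpha> \<xi>) * \<omega> \<xi>) = 0"
    and "v1 = \<i> * l * u1" "Im (u1' * cnj u1) = 0"
  shows "v1 = 0"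
proof (rule ccontr)
  assume "v1 \<noteq> 0"
  define I where "I = integral\<^sup>L lebesgue (\<lambda>\<xi>. complex_of_real (mu \<alpha> \<xi>) * \<omega> \<xi>)"
  have "0 < Re (cnj v1 * I)"
    unfolding I_def by (rule re_cnj_mul_integral_mu_omega_pos[OF assms(1) \<open>v1 \<noteq> 0\<close> assms(3-6)])
  moreover have "Im (u1' * cnj u1) = - (c / l) * Re (cnj v1 * I)"
  proof -
    have "u1 = - \<i> * v1 / l" "u1' = - c * I"
      using assms(1,7,8) by (auto simp: I_def field_simps eq_neg_iff_add_eq_0)
    then have "u1' * cnj u1 = - \<i> * of_real (c / l) * (cnj v1 * I)"
      by (simp add: field_simps)
    then show ?thesis
      by simp
  qed
  ultimately show False
    using assms(1,2,9) by simp
qed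

lemma boundary_damping_eq_0:
  fixes \<omega> :: "real \<Rightarrow> complex" and l c \<eta> :: real and u1 u1' v1 :: complex
  assumes "c > 0" "\<eta> \<ge> 0" "L2_on UNIV \<omega>" "L2_on UNIV (\<lambda>\<xi>. complex_of_real \<bar>\<xi>\<bar> * \<omega> \<xi>)"
    and "AE \<xi> in lebesgue. - complex_of_real (\<xi>^2 + \<eta>) * \<omega> \<xi> + v1 * complex_of_real (mu \<alpha> \<xi>)
           = \<i> * l * \<omega> \<xi>"
    and "u1' + c * integral\<^sup>L lebesgue (\<lambda>\<xi>. complex_of_real (mu \<alpha> \<xi>) * \<omega> \<xi>) = 0"
    and "v1 = \<i> * l * u1" "Im (u1' * cnj u1) = 0"
  shows "v1 = 0" "AE \<xi> in lebesgue. \<omega> \<xi> = 0" "u1' = 0"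
proof -
  show "v1 = 0"
    using boundary_velocity_eq_0[OF _ assms] assms(7) by (cases "l = 0") simp_all
  show \<omega>: "AE \<xi> in lebesgue. \<omega> \<xi> = 0"
    using assms(5) AE_completion[OF AE_lborel_singleton[of 0]]
  proof eventually_elim
    case (elim \<xi>)
    then have "(complex_of_real (\<xi>^2 + \<eta>) + \<i> * l) * \<omega> \<xi> = 0"
      using \<open>v1 = 0\<close> by (simp add: algebra_simps neg_eq_iff_add_eq_0)
    moreover have "\<xi>^2 + \<eta> > 0"
      using elim(2) assms(2) by (simp add: add_pos_nonneg)
    then have "complex_of_real (\<xi>^2 + \<eta>) + \<i> * l \<noteq> 0"
      by (simp add: complex_eq_iff)
    ultimately show ?case
      by simp
  qed
  then have "integral\<^sup>L lebesgue (\<lambda>\<xi>. complex_of_real (mu \<alpha> \<xi>) * \<omega> \<xi>) = 0"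
    by (auto intro: integral_eq_zero_AE elim: eventually_mono)
  then show "u1' = 0"
    using assms(6) by simp
qed

section \<open>The eigenvalue problem\<close>

lemma kappa_pos: "0 < \<alpha> \<Longrightarrow> \<alpha> < 1 \<Longrightarrow> 0 < kappa \<alpha>"
  unfolding kappa_def by (intro divide_pos_pos sin_gt_zero) auto

lemma coupled_waves_of_in_DA:
  fixes a b lam :: real and u ux uxx v vx y yx yxx z zx \<omega> :: "real \<Rightarrow> complex"
  assumes "a \<noteq> 0" "in_DA \<alpha> \<eta> \<gamma> u ux uxx v vx y yx yxx z zx \<omega>"
    and "AE x in lebesgue. x \<in> {0<..<1} \<longrightarrow> v x = \<i> * lam * u x"
    and "AE x in lebesgue. x \<in> {0<..<1} \<longrightarrow> uxx x - b * z x = \<i> * lam * v x"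
    and "AE x in lebesgue. x \<in> {0<..<1} \<longrightarrow> z x = \<i> * lam * y x"
    and "AE x in lebesgue. x \<in> {0<..<1} \<longrightarrow> a * yxx x + b * v x = \<i> * lam * z x"
  shows "coupled_waves a b lam u ux y yx"
proof -
  have u: "weak_deriv01 u ux" "weak_deriv01 ux uxx" and y: "weak_deriv01 y yx" "weak_deriv01 yx yxx"
    using assms(2) unfolding in_DA_def by blast+
  have uxx: "AE x in lebesgue. x \<in> {0<..<1} \<longrightarrow> uxx x = - of_real (lam^2) * u x + \<i> * lam * b * y x"
    using assms(3-5) by eventually_elim (auto simp: algebra_simps power2_eq_square)
  have yxx: "AE x in lebesgue. x \<in> {0<..<1} \<longrightarrow>
      yxx x = (- of_real (lam^2) * y x - \<i> * lam * b * u x) / a"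
    using assms(3,5,6)
  proof eventually_elim
    case (elim x)
    then show ?case
      using assms(1) by (auto simp: eq_divide_eq algebra_simps power2_eq_square)
  qed
  have continuous: "continuous_on {0..1} u" "continuous_on {0..1} ux"
    "continuous_on {0..1} y" "continuous_on {0..1} yx"
    using u y by (simp_all add: weak_deriv01_continuous_on)
  show ?thesis
    unfolding coupled_waves_def
  proof (intro ballI conjI)
    fix x :: real
    assume "x \<in> {0..1}"
    show "(u has_vector_derivative ux x) (at x within {0..1})"
      "(y has_vector_derivative yx x) (at x within {0..1})"
      using weak_deriv01_has_vector_derivative[OF u(1) continuous(2) _ \<open>x \<in> {0..1}\<close>]
        weak_deriv01_has_vector_derivative[OF y(1) continuous(4) _ \<open>x \<in> {0..1}\<close>] by simp_all
    show "(ux has_vector_derivative (- of_real (lam^2) * u x + \<i> * lam * b * y x)) (at x within {0..1})"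
      by (rule weak_deriv01_has_vector_derivative[OF u(2) _ uxx \<open>x \<in> {0..1}\<close>])
        (intro continuous_intros continuous)
    show "(yx has_vector_derivative (- of_real (lam^2) * y x - \<i> * lam * b * u x) / a) (at x within {0..1})"
      by (rule weak_deriv01_has_vector_derivative[OF y(2) _ yxx \<open>x \<in> {0..1}\<close>])
        (intro continuous_intros continuous, use assms(1) in simp)
  qed
qed

theorem lemma2p5:
  fixes \<alpha> \<eta> \<gamma> a b lam :: real
    and u ux uxx v vx y yx yxx z zx \<omega> :: "real \<Rightarrow> complex"
  assumes "0 < \<alpha>" "\<alpha> < 1" "\<eta> \<ge> 0" "\<gamma> > 0" "a > 0" "b \<noteq> 0"
    and "\<forall>k1 k2 :: int. (k1, k2) \<noteq> (0, 0) \<longrightarrow>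
           b^2 \<noteq> ((k1^2 - a * k2^2) * (a * k1^2 - k2^2)) / ((a + 1) * (k1^2 + k2^2)) * pi^2"
    and "in_DA \<alpha> \<eta> \<gamma> u ux uxx v vx y yx yxx z zx \<omega>"
    and "AE x in lebesgue. x \<in> {0<..<1} \<longrightarrow> v x = \<i> * lam * u x"
    and "AE x in lebesgue. x \<in> {0<..<1} \<longrightarrow> uxx x - b * z x = \<i> * lam * v x"
    and "AE x in lebesgue. x \<in> {0<..<1} \<longrightarrow> z x = \<i> * lam * y x"
    and "AE x in lebesgue. x \<in> {0<..<1} \<longrightarrow> a * yxx x + b * v x = \<i> * lam * z x"
    and "AE \<xi> in lebesgue. - complex_of_real (\<xi>^2 + \<eta>) * \<omega> \<xi> + v 1 * complex_of_real (mu \<alpha> \<xi>)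
                           = \<i> * lam * \<omega> \<xi>"
  shows "(AE x in lebesgue. x \<in> {0<..<1} \<longrightarrow> u x = 0 \<and> v x = 0 \<and> y x = 0 \<and> z x = 0)
         \<and> (AE \<xi> in lebesgue. \<omega> \<xi> = 0)"
proof -
  from assms(8) have "u 0 = 0" "y 0 = 0" "y 1 = 0" "weak_deriv01 u ux" "weak_deriv01 v vx"
    and L2: "L2_on UNIV \<omega>" "L2_on UNIV (\<lambda>\<xi>. complex_of_real \<bar>\<xi>\<bar> * \<omega> \<xi>)"
    and boundary: "ux 1 + complex_of_real (\<gamma> * kappa \<alpha>) *
      integral\<^sup>L lebesgue (\<lambda>\<xi>. complex_of_real (mu \<alpha> \<xi>) * \<omega> \<xi>) = 0"
    unfolding in_DA_def by blast+
  have waves: "coupled_waves a b lam u ux y yx"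
    using coupled_waves_of_in_DA[OF _ assms(8-12)] assms(5) by simp
  have v1: "v 1 = \<i> * lam * u 1"
    by (rule continuous_on_AE_eq[OF _ _ _ assms(9)])
      (use weak_deriv01_continuous_on[OF \<open>weak_deriv01 u ux\<close>]
        weak_deriv01_continuous_on[OF \<open>weak_deriv01 v vx\<close>] in \<open>auto intro!: continuous_intros\<close>)
  have "Im (ux 1 * cnj (u 1)) = 0"
    using coupled_waves_energy_identity[OF waves] assms(5) \<open>u 0 = 0\<close> \<open>y 0 = 0\<close> \<open>y 1 = 0\<close> by simp
  then have "v 1 = 0" and \<omega>: "AE \<xi> in lebesgue. \<omega> \<xi> = 0" and "ux 1 = 0"
    using boundary_damping_eq_0[OF _ assms(3) L2 assms(13) boundary v1]
      kappa_pos[OF assms(1,2)] assms(4) by simp_all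
  moreover have "nonresonant a b"
    using assms(7) by (simp add: nonresonant_def)
  ultimately have "u x = 0 \<and> y x = 0" if "x \<in> {0..1}" for x
    using coupled_waves_eq_0[OF waves assms(5,6)] v1 \<open>u 0 = 0\<close> \<open>y 0 = 0\<close> \<open>y 1 = 0\<close> that by simp
  then show ?thesis
    using assms(9,11) \<omega> by (auto elim: eventually_mono)
qed

end
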